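(* Let $E/\mathbb{Q}$ be an elliptic curve without complex multiplication that has abelian entanglements, let $m$ be a positive integer with prime factorisation $m=\prod_{\ell}\ell^{\alpha_\ell}$, and for each prime $\ell\mid m$ let $S(\ell)$ be a nonempty subset of $G(\ell^{\alpha_\ell})$. Put $\mathcal{S}_m=\prod_{\ell\mid m}S(\ell)$ and $\mathcal{G}_m=\prod_{\ell\mid m}G(\ell^{\alpha_\ell})$. For each character $\tilde\chi$ of the finite abelian group $\Phi_m=\mathcal{G}_m/G(m)$ let $\chi=\tilde\chi\circ\psi_m$, where $\psi_m:\mathcal{G}_m\to\Phi_m$ is the quotient map, let $\chi_\ell$ be the restriction of $\chi$ to the factor $G(\ell^{\alpha_\ell})$, and set $E_{\chi,\ell}=\frac{1}{|S(\ell)|}\sum_{x\in S(\ell)}\chi_\ell(x)$. Then $$\frac{|\mathcal{S}_m\cap G(m)|}{|G(m)|}=\Big(1+\sum_{\tilde\chi\in\widehat{\Phi}_m\setminus\{1\}}\prod_{\ell\mid m}E_{\chi,\ell}\Big)\frac{|\mathcal{S}_m|}{|\mathcal{G}_m|}.$$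
   Context: $G(n)\leqslant\mathrm{GL}_2(\mathbb{Z}/n\mathbb{Z})$ denotes the image of the mod-$n$ Galois representation of $E$, and $G(m)$ is viewed via the Chinese remainder theorem as a subgroup of $\mathcal{G}_m$; since $E$ has abelian entanglements, $G(m)$ is normal in $\mathcal{G}_m$ with abelian quotient. $\widehat{\Phi}_m$ is the group of homomorphisms $\Phi_m\to\mathbb{C}^\times$. Definitions: let $G\leqslant\mathrm{GL}_2(\widehat{\mathbb{Z}})$ be the adelic image of $E$ and $G_{n^\infty}$ its image in $\prod_{\ell\mid n}\mathrm{GL}_2(\mathbb{Z}_\ell)$; $n$ is stable if $G_{n^\infty}$ is the full preimage of $G(n)$ under reduction, split if $G=G_{n^\infty}\times\prod_{\ell\nmid n}\mathrm{GL}_2(\mathbb{Z}_\ell)$; $m_E$ is the smallest split and stable positive integer. A subgroup $H\leqslant H_1\times\dots\times H_k$ surjecting onto each factor has abelian entanglements if for every partition $\{A,B\}$ of $\{1,\dots,k\}$ into nonempty sets the Goursat quotient $H_A/\{x\in H_A:(x,1)\in H\}$ is abelian ($H_A$ = image of $H$ in $\prod_{i\in A}H_i$). $E$ has abelian entanglements if $G(m_E)\leqslant\prod_{\ell^\alpha\|m_E}G(\ell^\alpha)$ has abelian entanglements. *)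

theory Defs
  imports "HOL-Algebra.Algebra" "HOL-Computational_Algebra.Primes" Complex_Main
begin

text \<open>Complex characters of a (finite) group \<open>\<Phi>\<close>: group homomorphisms from \<open>\<Phi>\<close>
  to the multiplicative group of nonzero complex numbers, extended by 0 outside the carrier
  (so that distinct characters are distinct functions and the set of characters is finite).\<close>
definition group_characters :: "('b, 'c) monoid_scheme \<Rightarrow> ('b \<Rightarrow> complex) set" where
  "group_characters \<Phi> =
     {c. (\<forall>x\<in>carrier \<Phi>. \<forall>y\<in>carrier \<Phi>. c (x \<otimes>\<^bsub>\<Phi>\<^esub> y) = c x * c y)
       \<and> (\<forall>x\<in>carrier \<Phi>. c x \<noteq> 0)
       \<and> (\<forall>x. x \<notin> carrier \<Phi> \<longrightarrow> c x = 0)}"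

definition trivial_character :: "('b, 'c) monoid_scheme \<Rightarrow> 'b \<Rightarrow> complex" where
  "trivial_character \<Phi> = (\<lambda>x. if x \<in> carrier \<Phi> then 1 else 0)"

definition factor_embed :: "'i set \<Rightarrow> ('i \<Rightarrow> ('a, 'c) monoid_scheme) \<Rightarrow> 'i \<Rightarrow> 'a \<Rightarrow> ('i \<Rightarrow> 'a)" where
  "factor_embed I G l x = (\<lambda>j\<in>I. if j = l then x else \<one>\<^bsub>G j\<^esub>)"

end

theory Submission
  imports Defs
begin

text \<open>
  The characters of the finite abelian group \<open>\<Phi>\<^sub>m = \<G>\<^sub>m / G(m)\<close> satisfy the orthogonality
  relation \<open>\<Sum>\<^sub>\<chi> \<chi>(\<psi> s) = |\<Phi>\<^sub>m|\<close> if \<open>s \<in> G(m)\<close> and \<open>0\<close> otherwise, so summing over \<open>s \<in> \<S>\<^sub>m\<close>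
  counts \<open>\<S>\<^sub>m \<inter> G(m)\<close>. Since \<open>\<chi> \<circ> \<psi>\<close> is multiplicative on the product \<open>\<G>\<^sub>m\<close>, it factors over the
  components, so its average over the box \<open>\<S>\<^sub>m\<close> is the product of the averages \<open>E\<^sub>\<chi>\<^sub>\<ell>\<close>; the trivial
  character contributes the summand 1, and Lagrange's theorem \<open>|\<G>\<^sub>m| = |\<Phi>\<^sub>m| |G(m)|\<close> finishes.
  Orthogonality needs enough characters: a character of a subgroup \<open>H\<close> of a finite abelian group
  extends to \<open>H\<langle>g\<rangle>\<close> by sending \<open>g\<close> to any \<open>k\<close>-th root of \<open>c(g\<^sup>k)\<close>, where \<open>k\<close> is the order of \<open>g\<close>
  modulo \<open>H\<close>; iterating, every character of a subgroup extends to the whole group.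
\<close>

definition character_on :: "('b, 'c) monoid_scheme \<Rightarrow> 'b set \<Rightarrow> ('b \<Rightarrow> complex) \<Rightarrow> bool" where
  "character_on G H c \<longleftrightarrow>
     (\<forall>x\<in>H. \<forall>y\<in>H. c (x \<otimes>\<^bsub>G\<^esub> y) = c x * c y) \<and> (\<forall>x\<in>H. c x \<noteq> 0)"

lemma complex_nth_root_exists:
  assumes "0 < n"
  obtains z :: complex where "z ^ n = w"
proof (cases "w = 0")
  case True
  then show ?thesis using that[of 0] assms by simp
next
  case False
  have "card {z::complex. z ^ n = w} \<noteq> 0" using card_nth_roots[OF False assms] assms by simp
  then obtain z where "z \<in> {z::complex. z ^ n = w}" by (metis card.empty ex_in_conv)
  then show ?thesis using that by simp
qed

lemma nontrivial_root_of_unity_exists: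
  assumes "1 < n"
  obtains z :: complex where "z ^ n = 1" "z \<noteq> 1"
proof -
  have "\<exists>z::complex. z ^ n = 1 \<and> z \<noteq> 1"
  proof (rule ccontr)
    assume "\<not> ?thesis"
    then have "{z::complex. z ^ n = 1} = {1}" by auto
    then show False using card_roots_unity_eq[of n] assms by simp
  qed
  then show ?thesis using that by blast
qed

context group
begin

lemma character_on_one:
  assumes "subgroup H G" "character_on G H c"
  shows "c \<one> = 1"
proof -
  have "\<one> \<in> H" using assms(1) subgroup.one_closed by blast
  then have "c \<one> = c \<one> * c \<one>" "c \<one> \<noteq> 0" using assms(2) unfolding character_on_def by force+
  then show ?thesis by simp
qed

lemma subgroup_nat_pow_closed:
  assumes "subgroup H G" "x \<in> H"
  shows "x [^] (n::nat) \<in> H"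
  using subgroup_int_pow_closed[OF assms, of "int n"] by (simp add: int_pow_int)

lemma character_on_pow:
  assumes "subgroup H G" "character_on G H c" "x \<in> H"
  shows "c (x [^] (n::nat)) = c x ^ n"
proof (induction n)
  case 0
  then show ?case using character_on_one[OF assms(1,2)] by simp
next
  case (Suc n)
  then show ?case using assms subgroup_nat_pow_closed[OF assms(1,3), of n]
    unfolding character_on_def by simp
qed

lemma finite_submonoid_imp_subgroup:
  assumes "finite (carrier G)" and "K \<subseteq> carrier G" and "\<one> \<in> K"
    and "\<And>a b. a \<in> K \<Longrightarrow> b \<in> K \<Longrightarrow> a \<otimes> b \<in> K"
  shows "subgroup K G"
proof (rule subgroupI)
  show "K \<subseteq> carrier G" "K \<noteq> {}" using assms(2,3) by auto
  show "a \<otimes> b \<in> K" if "a \<in> K" "b \<in> K" for a b using assms(4) that .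
  show "inv a \<in> K" if a: "a \<in> K" for a
  proof -
    have a_carrier: "a \<in> carrier G" using a assms(2) by auto
    have powers: "a [^] (n::nat) \<in> K" for n
      by (induction n) (use a assms(3,4) in auto)
    have "order G > 0" using assms(1) a_carrier unfolding order_def by (auto simp: card_gt_0_iff)
    then have "a [^] (order G - 1) \<otimes> a = \<one>"
      using pow_order_eq_1[OF a_carrier] by (metis Suc_diff_1 nat_pow_Suc)
    then have "inv a = a [^] (order G - 1)" using a_carrier by (intro inv_equality) auto
    then show ?thesis using powers by simp
  qed
qed

lemma least_power_in_subgroup:
  assumes "finite (carrier G)" "subgroup H G" "g \<in> carrier G"
  obtains k :: nat where "0 < k" "g [^] k \<in> H" "\<And>d. 0 < d \<Longrightarrow> d < k \<Longrightarrow> g [^] d \<notin> H"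
proof -
  have "order G > 0" using assms(1,3) unfolding order_def by (auto simp: card_gt_0_iff)
  moreover have "g [^] order G \<in> H"
    using pow_order_eq_1[OF assms(3)] subgroup.one_closed[OF assms(2)] by simp
  ultimately have ex: "\<exists>d::nat. 0 < d \<and> g [^] d \<in> H" by blast
  define k where "k = (LEAST d::nat. 0 < d \<and> g [^] d \<in> H)"
  show ?thesis
  proof (rule that)
    show "0 < k" "g [^] k \<in> H" using LeastI_ex[OF ex] unfolding k_def by auto
    show "g [^] d \<notin> H" if "0 < d" "d < k" for d
      using not_less_Least[of d "\<lambda>d::nat. 0 < d \<and> g [^] d \<in> H"] that unfolding k_def by blast
  qed
qed

lemma in_group_characters_iff:
  "c \<in> group_characters G \<longleftrightarrow> character_on G (carrier G) c \<and> (\<forall>x. x \<notin> carrier G \<longrightarrow> c x = 0)"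
  unfolding group_characters_def character_on_def by blast

lemma group_character_one: "c \<in> group_characters G \<Longrightarrow> c \<one> = 1"
  using character_on_one[OF subgroup_self] in_group_characters_iff by blast

lemma trivial_character_in_group_characters: "trivial_character G \<in> group_characters G"
  unfolding group_characters_def trivial_character_def by auto

lemma group_characters_mult:
  "c \<in> group_characters G \<Longrightarrow> d \<in> group_characters G \<Longrightarrow> (\<lambda>x. c x * d x) \<in> group_characters G"
  unfolding group_characters_def by auto

lemma finite_group_characters:
  assumes "finite (carrier G)"
  shows "finite (group_characters G)"
proof -
  let ?roots = "{z::complex. z ^ order G = 1}"
  have "order G > 0" using assms one_closed unfolding order_def by (auto simp: card_gt_0_iff)
  then have "finite ?roots" by (simp add: finite_roots_unity)
  then have "finite {f. \<forall>x. (x \<in> carrier G \<longrightarrow> f x \<in> ?roots) \<and> (x \<notin> carrier G \<longrightarrow> f x = 0)}"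
    by (rule finite_set_of_finite_funs[OF assms])
  moreover have "c x ^ order G = 1" if "c \<in> group_characters G" "x \<in> carrier G" for c x
  proof -
    have "character_on G (carrier G) c" using that(1) in_group_characters_iff by blast
    then have "c (x [^] order G) = c x ^ order G" using character_on_pow[OF subgroup_self] that(2) by blast
    then show ?thesis using pow_order_eq_1[OF that(2)] group_character_one[OF that(1)] by simp
  qed
  then have "group_characters G \<subseteq>
      {f. \<forall>x. (x \<in> carrier G \<longrightarrow> f x \<in> ?roots) \<and> (x \<notin> carrier G \<longrightarrow> f x = 0)}"
    by (auto simp: in_group_characters_iff)
  ultimately show ?thesis by (rule finite_subset[rotated])
qed

lemma sum_nontrivial_group_character:
  assumes "c \<in> group_characters G" "c \<noteq> trivial_character G"
  shows "(\<Sum>x\<in>carrier G. c x) = 0"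
proof -
  have c_char: "character_on G (carrier G) c" using assms(1) by (simp add: in_group_characters_iff)
  have "\<exists>y\<in>carrier G. c y \<noteq> 1"
  proof (rule ccontr)
    assume "\<not> ?thesis"
    then have "c = trivial_character G"
      using assms(1) unfolding in_group_characters_iff trivial_character_def by (auto simp: fun_eq_iff)
    then show False using assms(2) by contradiction
  qed
  then obtain y where y: "y \<in> carrier G" "c y \<noteq> 1" by blast
  have "(\<Sum>x\<in>carrier G. c x) = (\<Sum>x\<in>carrier G. c (y \<otimes> x))"
    by (rule sum.reindex_bij_witness[where i = "\<lambda>x. y \<otimes> x" and j = "\<lambda>x. inv y \<otimes> x"])
       (use y in \<open>simp_all add: m_assoc[symmetric]\<close>)
  also have "\<dots> = c y * (\<Sum>x\<in>carrier G. c x)"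
    using c_char y unfolding character_on_def by (simp add: sum_distrib_left)
  finally have "(1 - c y) * (\<Sum>x\<in>carrier G. c x) = 0" by (simp add: algebra_simps)
  then show ?thesis using y(2) by simp
qed

lemma sum_group_characters_at_one: "(\<Sum>c\<in>group_characters G. c \<one>) = of_nat (card (group_characters G))"
proof -
  have "(\<Sum>c\<in>group_characters G. c \<one>) = (\<Sum>c\<in>group_characters G. 1)"
    using group_character_one by (rule sum.cong[OF refl])
  then show ?thesis by simp
qed

end

text \<open>For \<open>k\<close> the least positive exponent with \<open>g\<^sup>k \<in> H\<close>, this is \<open>H\<langle>g\<rangle>\<close>, every element written
  uniquely as \<open>h g\<^sup>i\<close> with \<open>h \<in> H\<close>, \<open>i < k\<close>.\<close>
definition adjoin_powers :: "('a, 'b) monoid_scheme \<Rightarrow> 'a set \<Rightarrow> 'a \<Rightarrow> nat \<Rightarrow> 'a set" where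
  "adjoin_powers G H g k = (\<lambda>(h, i). h \<otimes>\<^bsub>G\<^esub> g [^]\<^bsub>G\<^esub> i) ` (H \<times> {..<k})"

lemma mem_adjoin_powers: "a \<in> adjoin_powers G H g k \<longleftrightarrow> (\<exists>h\<in>H. \<exists>i<k. a = h \<otimes>\<^bsub>G\<^esub> g [^]\<^bsub>G\<^esub> i)"
  unfolding adjoin_powers_def by auto

context comm_group
begin

lemma mult_powers_reduce:
  fixes i j k :: nat
  assumes "h \<in> carrier G" "h' \<in> carrier G" "g \<in> carrier G"
  shows "(h \<otimes> g [^] i) \<otimes> (h' \<otimes> g [^] j) =
    (h \<otimes> h' \<otimes> (g [^] k) [^] ((i + j) div k)) \<otimes> g [^] ((i + j) mod k)"
proof -
  have "g [^] i \<otimes> g [^] j = g [^] (k * ((i + j) div k) + (i + j) mod k)"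
    using assms(3) by (simp only: mult_div_mod_eq nat_pow_mult)
  also have "\<dots> = (g [^] k) [^] ((i + j) div k) \<otimes> g [^] ((i + j) mod k)"
    using assms(3) by (simp add: nat_pow_mult nat_pow_pow)
  finally have "g [^] i \<otimes> g [^] j = (g [^] k) [^] ((i + j) div k) \<otimes> g [^] ((i + j) mod k)" .
  then show ?thesis using assms by (simp add: m_ac)
qed

context
  fixes H :: "'a set" and g :: 'a and k :: nat
  assumes H: "subgroup H G" and g: "g \<in> carrier G" and k: "0 < k" "g [^] k \<in> H"
    and k_least: "\<And>d. 0 < d \<Longrightarrow> d < k \<Longrightarrow> g [^] d \<notin> H"
begin

lemma inj_on_adjoin_powers_repr: "inj_on (\<lambda>(h, i). h \<otimes> g [^] i) (H \<times> {..<k})"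
proof -
  have H_carrier: "H \<subseteq> carrier G" using subgroup.subset[OF H] .
  have eq_exponent: "i = j"
    if "h \<in> H" "h' \<in> H" "j < k" "i \<le> j" "h \<otimes> g [^] i = h' \<otimes> g [^] j" for h h' i j
  proof -
    have carrier: "h \<in> carrier G" "h' \<in> carrier G" using that(1,2) H_carrier by auto
    have "g [^] j = g [^] (j - i) \<otimes> g [^] i"
      using that(4) g by (simp add: nat_pow_mult)
    then have "h \<otimes> g [^] i = (h' \<otimes> g [^] (j - i)) \<otimes> g [^] i"
      using that(5) carrier g by (simp add: m_assoc)
    then have "h = h' \<otimes> g [^] (j - i)" using carrier g by (meson m_closed nat_pow_closed right_cancel)
    then have "g [^] (j - i) = inv h' \<otimes> h" using carrier g by (simp add: inv_solve_left)
    then have "g [^] (j - i) \<in> H" using that(1,2) H by (simp add: subgroup.m_closed subgroup.m_inv_closed)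
    then show "i = j" using k_least[of "j - i"] that(3,4) by linarith
  qed
  show ?thesis
  proof (rule inj_onI)
    fix p q assume p: "p \<in> H \<times> {..<k}" and q: "q \<in> H \<times> {..<k}"
      and eq: "(\<lambda>(h, i). h \<otimes> g [^] i) p = (\<lambda>(h, i). h \<otimes> g [^] i) q"
    obtain h i h' j where pq: "p = (h, i)" "q = (h', j)" by fastforce
    have h: "h \<in> H" "h' \<in> H" and ij: "i < k" "j < k" using p q unfolding pq by auto
    have eq': "h \<otimes> g [^] i = h' \<otimes> g [^] j" using eq unfolding pq by simp
    consider "i \<le> j" | "j \<le> i" by linarith
    then have "i = j"
      by cases (use eq_exponent[OF h ij(2) _ eq'] eq_exponent[OF h(2,1) ij(1) _ eq'[symmetric]] in auto)
    then show "p = q" using eq' h H_carrier g unfolding pq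
      by (metis nat_pow_closed right_cancel subsetD)
  qed
qed

lemma adjoin_powers_mult:
  assumes "h \<in> H" "h' \<in> H"
  shows "(h \<otimes> g [^] i) \<otimes> (h' \<otimes> g [^] j) =
    (h \<otimes> h' \<otimes> (g [^] k) [^] ((i + j) div k)) \<otimes> g [^] ((i + j) mod k)"
    and "h \<otimes> h' \<otimes> (g [^] k) [^] ((i + j) div k) \<in> H"
    and "(i + j) mod k < k"
  using mult_powers_reduce subgroup.mem_carrier[OF H] g assms
    subgroup.m_closed[OF H] subgroup_nat_pow_closed[OF H k(2)] k(1) by auto

lemma subset_adjoin_powers: "insert g H \<subseteq> adjoin_powers G H g k"
proof -
  have "x \<in> adjoin_powers G H g k" if "x \<in> H" for x
    unfolding mem_adjoin_powers using that k(1) subgroup.mem_carrier[OF H]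
    by (intro bexI[of _ x] exI[of _ 0]) auto
  moreover have "g \<in> adjoin_powers G H g k"
  proof (cases "k = 1")
    case True
    then have "g \<in> H" using k(2) g by simp
    then show ?thesis using calculation by blast
  next
    case False
    then show ?thesis
      unfolding mem_adjoin_powers using k(1) g subgroup.one_closed[OF H]
      by (intro bexI[of _ \<one>] exI[of _ 1]) auto
  qed
  ultimately show ?thesis by blast
qed

lemma subgroup_adjoin_powers:
  assumes "finite (carrier G)"
  shows "subgroup (adjoin_powers G H g k) G"
proof (rule finite_submonoid_imp_subgroup[OF assms])
  show "adjoin_powers G H g k \<subseteq> carrier G"
    using subgroup.mem_carrier[OF H] g by (auto simp: mem_adjoin_powers)
  show "\<one> \<in> adjoin_powers G H g k"
    using subset_adjoin_powers subgroup.one_closed[OF H] by blast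
  show "a \<otimes> b \<in> adjoin_powers G H g k"
    if a_mem: "a \<in> adjoin_powers G H g k"
      and b_mem: "b \<in> adjoin_powers G H g k" for a b
  proof -
    obtain h i where a: "a = h \<otimes> g [^] i" "h \<in> H" "i < k" using a_mem by (auto simp: mem_adjoin_powers)
    obtain h' j where b: "b = h' \<otimes> g [^] j" "h' \<in> H" "j < k" using b_mem by (auto simp: mem_adjoin_powers)
    show ?thesis
      unfolding a b adjoin_powers_mult(1)[OF a(2) b(2)] mem_adjoin_powers
      using adjoin_powers_mult(2,3)[OF a(2) b(2), of i j] by blast
  qed
qed

lemma character_on_adjoin_powers:
  assumes c: "character_on G H c" and z: "z ^ k = c (g [^] k)"
  obtains c' where "character_on G (adjoin_powers G H g k) c'"
    and "\<And>x. x \<in> H \<Longrightarrow> c' x = c x" and "c' g = z"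
proof -
  let ?repr = "\<lambda>(h, i). h \<otimes> g [^] i"
  define c' where "c' = (\<lambda>(h, i). c h * z ^ i) \<circ> the_inv_into (H \<times> {..<k}) ?repr"
  have c'_repr: "c' (h \<otimes> g [^] i) = c h * z ^ i" if "h \<in> H" "i < k" for h i
    using the_inv_into_f_f[OF inj_on_adjoin_powers_repr, of "(h, i)"] that unfolding c'_def by simp
  have c_mult: "c (a \<otimes> b) = c a * c b" and c_nonzero: "c a \<noteq> 0" if "a \<in> H" "b \<in> H" for a b
    using c that unfolding character_on_def by auto
  have "z \<noteq> 0" using z c_nonzero[OF k(2) k(2)] k(1) by (metis zero_power)
  have "character_on G (adjoin_powers G H g k) c'"
    unfolding character_on_def
  proof (intro conjI ballI)
    fix a b assume "a \<in> adjoin_powers G H g k" "b \<in> adjoin_powers G H g k"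
    then obtain h i h' j where a: "a = h \<otimes> g [^] i" "h \<in> H" "i < k"
      and b: "b = h' \<otimes> g [^] j" "h' \<in> H" "j < k" by (auto simp: mem_adjoin_powers)
    let ?q = "(i + j) div k" and ?r = "(i + j) mod k"
    have "c' (a \<otimes> b) = c (h \<otimes> h' \<otimes> (g [^] k) [^] ?q) * z ^ ?r"
      unfolding a b adjoin_powers_mult(1)[OF a(2) b(2)]
      using c'_repr adjoin_powers_mult(2,3)[OF a(2) b(2)] by blast
    also have "\<dots> = c h * c h' * (z ^ k) ^ ?q * z ^ ?r"
      using a(2) b(2) k(2) subgroup_nat_pow_closed[OF H k(2)] subgroup.m_closed[OF H]
      by (simp add: c_mult character_on_pow[OF H c] z)
    also have "\<dots> = c h * c h' * z ^ (i + j)"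
      by (simp add: mult.assoc power_mult[symmetric] power_add[symmetric])
    also have "\<dots> = c' a * c' b"
      using a b c'_repr by (simp add: power_add)
    finally show "c' (a \<otimes> b) = c' a * c' b" .
  next
    fix a assume "a \<in> adjoin_powers G H g k"
    then obtain h i where "a = h \<otimes> g [^] i" "h \<in> H" "i < k" by (auto simp: mem_adjoin_powers)
    then show "c' a \<noteq> 0" using c'_repr c_nonzero \<open>z \<noteq> 0\<close> by simp
  qed
  moreover have "c' x = c x" if "x \<in> H" for x
    using c'_repr[OF that k(1)] that subgroup.mem_carrier[OF H] by simp
  moreover have "c' g = z"
  proof (cases "k = 1")
    case True
    then show ?thesis using calculation(2)[of g] k(2) g z by simp
  next
    case False
    then show ?thesis
      using c'_repr[OF subgroup.one_closed[OF H], of 1] k(1) g character_on_one[OF H c] by simp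
  qed
  ultimately show ?thesis using that by blast
qed

end

lemma character_on_extends:
  assumes "finite (carrier G)"
  shows "subgroup H G \<Longrightarrow> character_on G H c \<Longrightarrow>
    \<exists>c'. character_on G (carrier G) c' \<and> (\<forall>x\<in>H. c' x = c x)"
proof (induction "card (carrier G) - card H" arbitrary: H c rule: less_induct)
  case less
  show ?case
  proof (cases "H = carrier G")
    case True
    then show ?thesis using less.prems(2) by blast
  next
    case False
    then obtain g where g: "g \<in> carrier G" "g \<notin> H" using subgroup.subset[OF less.prems(1)] by blast
    obtain k :: nat where k: "0 < k" "g [^] k \<in> H" "\<And>d. 0 < d \<Longrightarrow> d < k \<Longrightarrow> g [^] d \<notin> H"
      using least_power_in_subgroup[OF assms less.prems(1) g(1)] by blast
    obtain z where z: "z ^ k = c (g [^] k)" using complex_nth_root_exists[OF k(1)] .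
    let ?K = "adjoin_powers G H g k"
    obtain c' where c': "character_on G ?K c'" "\<And>x. x \<in> H \<Longrightarrow> c' x = c x"
      using character_on_adjoin_powers[OF less.prems(1) g(1) k less.prems(2) z] by blast
    have K: "subgroup ?K G" using subgroup_adjoin_powers[OF less.prems(1) g(1) k assms] .
    have "H \<subset> ?K" using subset_adjoin_powers[OF less.prems(1) g(1) k] g(2) by blast
    then have "card H < card ?K"
      using subgroup.subset[OF K] assms by (meson finite_subset psubset_card_mono)
    moreover have "card ?K \<le> card (carrier G)" using subgroup.subset[OF K] assms by (simp add: card_mono)
    ultimately have "card (carrier G) - card ?K < card (carrier G) - card H" by linarith
    then obtain c'' where c'': "character_on G (carrier G) c''" "\<forall>x\<in>?K. c'' x = c' x"
      using less.hyps K c'(1) by blast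
    have "\<forall>x\<in>H. c'' x = c x" using c''(2) c'(2) subset_adjoin_powers[OF less.prems(1) g(1) k] by auto
    then show ?thesis using c''(1) by blast
  qed
qed

lemma exists_group_character_ne_one:
  assumes "finite (carrier G)" "x \<in> carrier G" "x \<noteq> \<one>"
  obtains c where "c \<in> group_characters G" "c x \<noteq> 1"
proof -
  have triv: "subgroup {\<one>} G" "character_on G {\<one>} (\<lambda>_. 1)"
    using triv_subgroup unfolding character_on_def by auto
  obtain k :: nat where k: "0 < k" "x [^] k \<in> {\<one>}" "\<And>d. 0 < d \<Longrightarrow> d < k \<Longrightarrow> x [^] d \<notin> {\<one>}"
    using least_power_in_subgroup[OF assms(1) triv(1) assms(2)] by blast
  have "k \<noteq> 1" using k(2) assms(2,3) by auto
  then obtain z :: complex where z: "z ^ k = 1" "z \<noteq> 1"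
    using nontrivial_root_of_unity_exists[of k] k(1) by force
  let ?K = "adjoin_powers G {\<one>} x k"
  obtain c' where c': "character_on G ?K c'" "c' x = z"
    using character_on_adjoin_powers[OF triv(1) assms(2) k triv(2)] z(1) by auto
  obtain c'' where c'': "character_on G (carrier G) c''" "\<forall>y\<in>?K. c'' y = c' y"
    using character_on_extends[OF assms(1) subgroup_adjoin_powers[OF triv(1) assms(2) k assms(1)] c'(1)]
    by blast
  have "x \<in> ?K" using subset_adjoin_powers[OF triv(1) assms(2) k] by blast
  then have "c'' x = z" using bspec[OF c''(2)] c'(2) by simp
  moreover have "(\<lambda>y. if y \<in> carrier G then c'' y else 0) \<in> group_characters G"
    using c''(1) unfolding in_group_characters_iff character_on_def by auto
  ultimately show ?thesis using that assms(2) z(2) by force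
qed

lemma sum_group_characters_at_ne_one:
  assumes "finite (carrier G)" "x \<in> carrier G" "x \<noteq> \<one>"
  shows "(\<Sum>c\<in>group_characters G. c x) = 0"
proof -
  let ?X = "group_characters G"
  obtain c0 where c0: "c0 \<in> ?X" "c0 x \<noteq> 1" using exists_group_character_ne_one[OF assms] .
  define mult_c0 where "mult_c0 c = (\<lambda>y. c0 y * c y)" for c
  have inj: "inj_on mult_c0 ?X"
  proof (rule inj_onI)
    fix c d assume c: "c \<in> ?X" and d: "d \<in> ?X" and eq: "mult_c0 c = mult_c0 d"
    show "c = d"
    proof
      fix y show "c y = d y"
      proof (cases "y \<in> carrier G")
        case True
        then have "c0 y \<noteq> 0" using c0(1) unfolding in_group_characters_iff character_on_def by blast
        then show ?thesis using fun_cong[OF eq, of y] unfolding mult_c0_def by simp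
      next
        case False
        then show ?thesis using c d unfolding in_group_characters_iff by simp
      qed
    qed
  qed
  have "mult_c0 ` ?X \<subseteq> ?X" using group_characters_mult[OF c0(1)] unfolding mult_c0_def by blast
  then have "mult_c0 ` ?X = ?X"
    using card_subset_eq[OF finite_group_characters[OF assms(1)]] card_image[OF inj] by simp
  then have "(\<Sum>c\<in>?X. c x) = (\<Sum>c\<in>?X. mult_c0 c x)"
    using sum.reindex[OF inj, of "\<lambda>c. c x"] by simp
  also have "\<dots> = (\<Sum>c\<in>?X. c0 x * c x)" unfolding mult_c0_def ..
  also have "\<dots> = c0 x * (\<Sum>c\<in>?X. c x)" by (simp add: sum_distrib_left)
  finally have "(1 - c0 x) * (\<Sum>c\<in>?X. c x) = 0" by (simp add: algebra_simps)
  then show ?thesis using c0(2) by simp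
qed

lemma card_group_characters:
  assumes "finite (carrier G)"
  shows "card (group_characters G) = order G"
proof -
  let ?X = "group_characters G"
  have "(\<Sum>c\<in>?X. \<Sum>x\<in>carrier G. c x) = (\<Sum>c\<in>?X. if c = trivial_character G then of_nat (order G) else 0)"
  proof (rule sum.cong[OF refl])
    fix c assume c: "c \<in> ?X"
    show "(\<Sum>x\<in>carrier G. c x) = (if c = trivial_character G then of_nat (order G) else 0)"
    proof (cases "c = trivial_character G")
      case True
      then show ?thesis by (simp add: trivial_character_def order_def)
    next
      case False
      then show ?thesis using sum_nontrivial_group_character[OF c] by simp
    qed
  qed
  also have "\<dots> = of_nat (order G)"
    using finite_group_characters[OF assms] trivial_character_in_group_characters by (simp add: sum.delta')
  finally have by_characters: "(\<Sum>c\<in>?X. \<Sum>x\<in>carrier G. c x) = of_nat (order G)" .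
  have "(\<Sum>x\<in>carrier G. \<Sum>c\<in>?X. c x) = (\<Sum>x\<in>carrier G. if x = \<one> then of_nat (card ?X) else 0)"
  proof (rule sum.cong[OF refl])
    fix x assume x: "x \<in> carrier G"
    show "(\<Sum>c\<in>?X. c x) = (if x = \<one> then of_nat (card ?X) else 0)"
      using sum_group_characters_at_one sum_group_characters_at_ne_one[OF assms x] by simp
  qed
  also have "\<dots> = of_nat (card ?X)" using assms by (simp add: sum.delta')
  finally have by_elements: "(\<Sum>x\<in>carrier G. \<Sum>c\<in>?X. c x) = (of_nat (card ?X) :: complex)" .
  have "(of_nat (card ?X) :: complex) = of_nat (order G)"
    using by_characters by_elements sum.swap[of "\<lambda>c x. c x :: complex" "carrier G" ?X] by simp
  then show ?thesis by simp
qed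

lemma sum_group_characters:
  assumes "finite (carrier G)" "x \<in> carrier G"
  shows "(\<Sum>c\<in>group_characters G. c x) = (if x = \<one> then of_nat (order G) else 0)"
proof (cases "x = \<one>")
  case True
  then show ?thesis using sum_group_characters_at_one card_group_characters[OF assms(1)] by simp
next
  case False
  then show ?thesis using sum_group_characters_at_ne_one[OF assms] by simp
qed

end

lemma (in normal) group_character_rcoset_mult:
  assumes "c \<in> group_characters (G Mod H)" "x \<in> carrier G" "y \<in> carrier G"
  shows "c (H #> (x \<otimes> y)) = c (H #> x) * c (H #> y)"
proof -
  have "H #> x \<in> carrier (G Mod H)" "H #> y \<in> carrier (G Mod H)"
    using assms(2,3) by (auto simp: carrier_FactGroup)
  then show ?thesis
    using assms(1) rcos_sum[OF assms(2,3)] unfolding group_characters_def by force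
qed

lemma (in normal) group_character_rcoset_one:
  assumes "c \<in> group_characters (G Mod H)"
  shows "c (H #> \<one>) = 1"
  using group.group_character_one[OF factorgroup_is_group assms] by (simp add: coset_mult_one[OF subset])

lemma (in normal) sum_group_characters_rcosets:
  assumes "finite (carrier G)" "comm_group (G Mod H)" "T \<subseteq> carrier G"
  shows "(\<Sum>c\<in>group_characters (G Mod H). \<Sum>s\<in>T. c (H #> s)) =
    of_nat (order (G Mod H)) * of_nat (card (T \<inter> H))"
proof -
  have "(\<Sum>c\<in>group_characters (G Mod H). c (H #> s)) = (if s \<in> H then of_nat (order (G Mod H)) else 0)"
    if "s \<in> T" for s
  proof -
    have s: "s \<in> carrier G" using that assms(3) by blast
    have "H #> s \<in> carrier (G Mod H)" using s by (auto simp: carrier_FactGroup)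
    moreover have "H #> s = \<one>\<^bsub>G Mod H\<^esub> \<longleftrightarrow> s \<in> H"
      using coset_join1[of H s] coset_join2[of s H] s is_subgroup by auto
    moreover have "finite (carrier (G Mod H))" using assms(1) by (simp add: carrier_FactGroup)
    ultimately show ?thesis using comm_group.sum_group_characters[OF assms(2)] by simp
  qed
  then have "(\<Sum>s\<in>T. \<Sum>c\<in>group_characters (G Mod H). c (H #> s)) =
      (\<Sum>s\<in>T. if s \<in> H then of_nat (order (G Mod H)) else 0)"
    by (rule sum.cong[OF refl])
  also have "\<dots> = of_nat (order (G Mod H)) * of_nat (card (T \<inter> H))"
    using finite_subset[OF assms(3,1)] by (simp add: sum.If_cases Int_def)
  finally show ?thesis by (rule trans[OF sum.swap])
qed

lemma (in normal) card_inter_eq_character_averages: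
  assumes "finite (carrier G)" "comm_group (G Mod H)" "T \<subseteq> carrier G" "T \<noteq> {}"
  shows "of_nat (card (T \<inter> H)) / of_nat (card H) =
    (1 + (\<Sum>c\<in>group_characters (G Mod H) - {trivial_character (G Mod H)}.
            (\<Sum>s\<in>T. c (H #> s)) / of_nat (card T)))
    * of_nat (card T) / of_nat (order G)"
proof -
  interpret \<Phi>: comm_group "G Mod H" using assms(2) .
  let ?X = "group_characters (G Mod H)" and ?average = "\<lambda>c. (\<Sum>s\<in>T. c (H #> s)) / of_nat (card T)"
  have finite_\<Phi>: "finite (carrier (G Mod H))" using assms(1) by (simp add: carrier_FactGroup)
  have card_T: "card T \<noteq> 0" using assms(3,4) finite_subset[OF assms(3,1)] by simp
  have "(\<Sum>s\<in>T. trivial_character (G Mod H) (H #> s)) = of_nat (card T)"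
    using assms(3) unfolding trivial_character_def by (simp add: carrier_FactGroup subset_iff)
  then have average_trivial: "?average (trivial_character (G Mod H)) = 1" using card_T by simp
  have "(\<Sum>c\<in>?X. ?average c) = of_nat (order (G Mod H)) * of_nat (card (T \<inter> H)) / of_nat (card T)"
    using sum_group_characters_rcosets[OF assms(1-3)] by (simp add: sum_divide_distrib[symmetric])
  then have sum_averages: "1 + (\<Sum>c\<in>?X - {trivial_character (G Mod H)}. ?average c) =
      of_nat (order (G Mod H)) * of_nat (card (T \<inter> H)) / of_nat (card T)"
    using sum.remove[OF \<Phi>.finite_group_characters[OF finite_\<Phi>] \<Phi>.trivial_character_in_group_characters,
      of ?average] average_trivial by simp
  have lagrange: "order G = order (G Mod H) * card H"
    using lagrange[OF is_subgroup] unfolding order_def by (simp add: FactGroup_def)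
  have "order (G Mod H) \<noteq> 0" using finite_\<Phi> \<Phi>.one_closed unfolding order_def by auto
  moreover have "card H \<noteq> 0" using finite_imp_card_positive[OF assms(1)] by simp
  ultimately show ?thesis unfolding sum_averages lagrange using card_T by (simp add: field_simps)
qed

lemma multiplicative_on_product_group:
  fixes f :: "('i \<Rightarrow> 'a) \<Rightarrow> 'b :: comm_monoid_mult"
  assumes I: "finite I" and monoids: "\<And>i. i \<in> I \<Longrightarrow> monoid (G i)"
    and mult: "\<And>x y. x \<in> carrier (product_group I G) \<Longrightarrow> y \<in> carrier (product_group I G) \<Longrightarrow>
      f (x \<otimes>\<^bsub>product_group I G\<^esub> y) = f x * f y"
    and one: "f \<one>\<^bsub>product_group I G\<^esub> = 1"
    and s: "s \<in> carrier (product_group I G)"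
  shows "f s = (\<Prod>l\<in>I. f (factor_embed I G l (s l)))"
proof -
  define s_on where "s_on J = (\<lambda>j\<in>I. if j \<in> J then s j else \<one>\<^bsub>G j\<^esub>)" for J
  have s_carrier: "s i \<in> carrier (G i)" if "i \<in> I" for i using s that by auto
  have s_on_carrier: "s_on J \<in> carrier (product_group I G)" for J
    using s_carrier monoids unfolding s_on_def by (auto simp: monoid.one_closed)
  have embed_carrier: "factor_embed I G l (s l) \<in> carrier (product_group I G)" if "l \<in> I" for l
    using s_carrier monoids that unfolding factor_embed_def by (auto simp: monoid.one_closed)
  have s_on_insert: "s_on (insert l J) = s_on J \<otimes>\<^bsub>product_group I G\<^esub> factor_embed I G l (s l)"
    if "l \<in> I" "l \<notin> J" for l J
    using that s_carrier monoids unfolding s_on_def factor_embed_def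
    by (auto simp: fun_eq_iff monoid.l_one monoid.r_one monoid.one_closed)
  have "f (s_on J) = (\<Prod>l\<in>J. f (factor_embed I G l (s l)))" if "finite J" "J \<subseteq> I" for J
    using that
  proof (induction J rule: finite_induct)
    case empty
    have "s_on {} = \<one>\<^bsub>product_group I G\<^esub>" unfolding s_on_def by simp
    then show ?case using one by (metis prod.empty)
  next
    case (insert l J)
    have l: "l \<in> I" and J: "J \<subseteq> I" using insert.prems by auto
    have "f (s_on (insert l J)) = f (s_on J) * f (factor_embed I G l (s l))"
      unfolding s_on_insert[OF l insert.hyps(2)] by (rule mult[OF s_on_carrier embed_carrier[OF l]])
    then show ?case using insert.IH[OF J] insert.hyps by (simp add: mult.commute)
  qed
  moreover have "s_on I = s" using s unfolding s_on_def by (auto simp: PiE_def extensional_def)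
  ultimately show ?thesis using I by blast
qed

lemma average_over_PiE_prod:
  fixes f :: "('i \<Rightarrow> 'a) \<Rightarrow> 'b :: field"
  assumes "finite I" "\<And>l. l \<in> I \<Longrightarrow> finite (S l)"
    and "\<And>s. s \<in> PiE I S \<Longrightarrow> f s = (\<Prod>l\<in>I. g l (s l))"
  shows "(\<Sum>s\<in>PiE I S. f s) / of_nat (card (PiE I S)) = (\<Prod>l\<in>I. (\<Sum>x\<in>S l. g l x) / of_nat (card (S l)))"
proof -
  have "(\<Sum>s\<in>PiE I S. f s) = (\<Prod>l\<in>I. \<Sum>x\<in>S l. g l x)"
    using assms by (simp add: prod_sum_PiE)
  then show ?thesis using assms(1) by (simp add: card_PiE prod_dividef)
qed

theorem theorem3p4:
  fixes m :: nat
    and G :: "nat \<Rightarrow> 'a monoid"   \<comment> \<open>\<open>G \<ell>\<close> stands for \<open>G(\<ell>^\<alpha>\<^sub>\<ell>)\<close>\<close>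
    and Gm :: "(nat \<Rightarrow> 'a) set"   \<comment> \<open>\<open>G(m)\<close>, viewed inside \<open>\<G>\<^sub>m\<close> via CRT\<close>
    and S :: "nat \<Rightarrow> 'a set"
  defines "\<G> \<equiv> product_group (prime_factors m) G"
    and "\<Phi> \<equiv> product_group (prime_factors m) G Mod Gm"
    and "\<S> \<equiv> (\<Pi>\<^sub>E l\<in>prime_factors m. S l)"
  assumes "m > 0"
    and "\<And>l. l \<in> prime_factors m \<Longrightarrow> group (G l)"
    and "\<And>l. l \<in> prime_factors m \<Longrightarrow> finite (carrier (G l))"
    and "subgroup Gm \<G>"
    and "\<And>l. l \<in> prime_factors m \<Longrightarrow> (\<lambda>g. g l) ` Gm = carrier (G l)"
    and "Gm \<lhd> \<G>"
    and "comm_group \<Phi>"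
    and "\<And>l. l \<in> prime_factors m \<Longrightarrow> S l \<subseteq> carrier (G l)"
    and "\<And>l. l \<in> prime_factors m \<Longrightarrow> S l \<noteq> {}"
  shows "(of_nat (card (\<S> \<inter> Gm)) / of_nat (card Gm) :: complex) =
    (1 + (\<Sum>c \<in> group_characters \<Phi> - {trivial_character \<Phi>}.
           \<Prod>l\<in>prime_factors m.
             (1 / of_nat (card (S l))) *
             (\<Sum>x\<in>S l. c (Gm #>\<^bsub>\<G>\<^esub> factor_embed (prime_factors m) G l x))))
    * of_nat (card \<S>) / of_nat (card (carrier \<G>))"
proof -
  let ?I = "prime_factors m" and ?\<psi> = "\<lambda>x. Gm #>\<^bsub>\<G>\<^esub> x"
  interpret \<G>: normal Gm \<G> using assms(9) .
  have \<Phi>: "\<Phi> = \<G> Mod Gm" unfolding \<Phi>_def \<G>_def ..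
  have finite_\<G>: "finite (carrier \<G>)" using assms(6) unfolding \<G>_def by (simp add: finite_PiE)
  have finite_S: "finite (S l)" if "l \<in> ?I" for l using assms(6,11) that by (meson finite_subset)
  have \<S>_carrier: "\<S> \<subseteq> carrier \<G>" using assms(11) unfolding \<S>_def \<G>_def by (auto simp: PiE_iff)
  have "\<S> \<noteq> {}" using assms(12) unfolding \<S>_def by (simp add: PiE_eq_empty_iff)
  have factorization: "(\<Sum>s\<in>\<S>. c (?\<psi> s)) / of_nat (card \<S>) =
      (\<Prod>l\<in>?I. (1 / of_nat (card (S l))) * (\<Sum>x\<in>S l. c (?\<psi> (factor_embed ?I G l x))))"
    if "c \<in> group_characters \<Phi>" for c
  proof -
    have "c (?\<psi> s) = (\<Prod>l\<in>?I. c (?\<psi> (factor_embed ?I G l (s l))))" if "s \<in> \<S>" for s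
      using multiplicative_on_product_group[of ?I G "\<lambda>x. c (?\<psi> x)" s] assms(5)
        \<G>.group_character_rcoset_mult \<G>.group_character_rcoset_one \<open>c \<in> group_characters \<Phi>\<close>
        \<S>_carrier that
      unfolding \<Phi> \<G>_def by (auto simp: group.is_monoid)
    then show ?thesis unfolding \<S>_def by (subst average_over_PiE_prod) (auto simp: finite_S)
  qed
  have "of_nat (card (\<S> \<inter> Gm)) / of_nat (card Gm) =
    (1 + (\<Sum>c\<in>group_characters \<Phi> - {trivial_character \<Phi>}. (\<Sum>s\<in>\<S>. c (?\<psi> s)) / of_nat (card \<S>)))
    * of_nat (card \<S>) / of_nat (card (carrier \<G>))"
    using \<G>.card_inter_eq_character_averages[OF finite_\<G> _ \<S>_carrier \<open>\<S> \<noteq> {}\<close>] assms(10)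
    unfolding \<Phi>[symmetric] order_def .
  also have "(\<Sum>c\<in>group_characters \<Phi> - {trivial_character \<Phi>}. (\<Sum>s\<in>\<S>. c (?\<psi> s)) / of_nat (card \<S>)) =
    (\<Sum>c\<in>group_characters \<Phi> - {trivial_character \<Phi>}.
      \<Prod>l\<in>?I. (1 / of_nat (card (S l))) * (\<Sum>x\<in>S l. c (?\<psi> (factor_embed ?I G l x))))"
    using factorization by (intro sum.cong) auto
  finally show ?thesis .
qed

end
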